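(* For any sample $(x,u)$, generative parameters $\theta=(f,T,\lambda)$, inference parameters $\phi$, and $\alpha\in[0,1]$, $$\mathrm{ELBO}_{\theta,\phi}(\alpha;x,u)=\alpha\,\mathrm{ELBO}_{\theta,\phi}(1;x,u)+(1-\alpha)\,\mathrm{ELBO}_{\theta,\phi}(0;x,u)+\alpha\,\mathcal{D}^{1-\alpha}_{\mathrm{Skew}}\big(q_\phi(\cdot|x)\,\|\,q_\phi(\cdot|x,u)\big)+(1-\alpha)\,\mathcal{D}^{\alpha}_{\mathrm{Skew}}\big(q_\phi(\cdot|x,u)\,\|\,q_\phi(\cdot|x)\big),$$ where $\mathcal{D}^{\beta}_{\mathrm{Skew}}(p\|q):=\mathcal{D}_{\mathrm{KL}}\big(p\,\|\,(1-\beta)p+\beta q\big)$.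
   Context: Observations $x\in\mathbb{R}^{d_X}$, covariates $u\in\mathbb{R}^{d_U}$, latents $z\in\mathbb{R}^{d_Z}$, $d_Z<d_X$. Generative parameters $\theta=(f,T,\lambda)$: mixing function $f:\mathbb{R}^{d_Z}\to\mathbb{R}^{d_X}$, label prior density $p_{T,\lambda}(z|u)=\prod_{i=1}^{d_Z}\exp(\lambda_i(u)\cdot T_i(z_i)-A(u)+B(z_i))$ (conditionally factorial exponential family with known $A,B$), decoder density $p_f(x|z)=p_\epsilon(x-f(z))$ for a fixed noise density $p_\epsilon$. Inference parameters $\phi$ determine an encoder density $q_\phi(z|x)$ and a posterior density $q_\phi(z|x,u)$ on $\mathbb{R}^{d_Z}$. For $\alpha\in[0,1]$, with $m_\alpha=\alpha q_\phi(\cdot|x)+(1-\alpha)q_\phi(\cdot|x,u)$, $\mathrm{ELBO}_{\theta,\phi}(\alpha;x,u)=\mathbb{E}_{z\sim m_\alpha}\log p_f(x|z)-\mathcal{D}_{\mathrm{KL}}(m_\alpha\|p_{T,\lambda}(\cdot|u))$. All expectations and divergences appearing are assumed finite. *)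

theory Defs
  imports "HOL-Analysis.Analysis"
begin

text \<open>Densities on R^dZ are real-valued functions, integrated against Lebesgue measure
  (lborel).\<close>

definition KL_div :: "('z::euclidean_space \<Rightarrow> real) \<Rightarrow> ('z \<Rightarrow> real) \<Rightarrow> real" where
  "KL_div p q = (LINT z|lborel. p z * ln (p z / q z))"

definition skew_div :: "real \<Rightarrow> ('z::euclidean_space \<Rightarrow> real) \<Rightarrow> ('z \<Rightarrow> real) \<Rightarrow> real" where
  "skew_div \<beta> p q = KL_div p (\<lambda>z. (1 - \<beta>) * p z + \<beta> * q z)"

definition prior_dens ::
  "('dz::finite \<Rightarrow> real \<Rightarrow> real^'k::finite) \<Rightarrow> (real^'du::finite \<Rightarrow> 'dz \<Rightarrow> real^'k)
    \<Rightarrow> (real^'du \<Rightarrow> real) \<Rightarrow> (real \<Rightarrow> real) \<Rightarrow> real^'du \<Rightarrow> real^'dz \<Rightarrow> real" where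
  "prior_dens T lam A B u z = (\<Prod>i\<in>UNIV. exp (lam u i \<bullet> T i (z $ i) - A u + B (z $ i)))"

definition dec_dens ::
  "(real^'dx::finite \<Rightarrow> real) \<Rightarrow> (real^'dz::finite \<Rightarrow> real^'dx) \<Rightarrow> real^'dx \<Rightarrow> real^'dz \<Rightarrow> real" where
  "dec_dens p_eps f x z = p_eps (x - f z)"

definition mix_dens ::
  "('phi \<Rightarrow> real^'dx::finite \<Rightarrow> real^'dz::finite \<Rightarrow> real)
    \<Rightarrow> ('phi \<Rightarrow> real^'dx \<Rightarrow> real^'du::finite \<Rightarrow> real^'dz \<Rightarrow> real)
    \<Rightarrow> 'phi \<Rightarrow> real \<Rightarrow> real^'dx \<Rightarrow> real^'du \<Rightarrow> real^'dz \<Rightarrow> real" where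
  "mix_dens q_enc q_post \<phi> \<alpha> x u z = \<alpha> * q_enc \<phi> x z + (1 - \<alpha>) * q_post \<phi> x u z"

definition ELBO ::
  "(real^'dx::finite \<Rightarrow> real) \<Rightarrow> (real^'dz::finite \<Rightarrow> real^'dx)
    \<Rightarrow> ('dz \<Rightarrow> real \<Rightarrow> real^'k::finite) \<Rightarrow> (real^'du::finite \<Rightarrow> 'dz \<Rightarrow> real^'k)
    \<Rightarrow> (real^'du \<Rightarrow> real) \<Rightarrow> (real \<Rightarrow> real)
    \<Rightarrow> ('phi \<Rightarrow> real^'dx \<Rightarrow> real^'dz \<Rightarrow> real)
    \<Rightarrow> ('phi \<Rightarrow> real^'dx \<Rightarrow> real^'du \<Rightarrow> real^'dz \<Rightarrow> real)
    \<Rightarrow> 'phi \<Rightarrow> real \<Rightarrow> real^'dx \<Rightarrow> real^'du \<Rightarrow> real" where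
  "ELBO p_eps f T lam A B q_enc q_post \<phi> \<alpha> x u =
     (LINT z|lborel. mix_dens q_enc q_post \<phi> \<alpha> x u z * ln (dec_dens p_eps f x z))
     - KL_div (mix_dens q_enc q_post \<phi> \<alpha> x u) (prior_dens T lam A B u)"

end

theory Submission
  imports Defs
begin

text \<open>With \<open>m = \<alpha> a + (1 - \<alpha>) b\<close>, the integrand \<open>m ln (m / p)\<close> of \<open>KL(m \<parallel> p)\<close> splits pointwise as
  \<open>\<alpha> a (ln (a / p) - ln (a / m)) + (1 - \<alpha>) b (ln (b / p) - ln (b / m))\<close>, because
  \<open>ln (a / p) - ln (a / m) = ln (m / p)\<close>. Integrating, \<open>KL(m \<parallel> p)\<close> is the \<open>\<alpha>\<close>-mixture of
  \<open>KL(a \<parallel> p)\<close> and \<open>KL(b \<parallel> p)\<close> minus the two skew divergences of \<open>a\<close> and \<open>b\<close> against \<open>m\<close>,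
  while the reconstruction term of the ELBO is linear in \<open>m\<close>. No normalisation of the
  densities is needed.\<close>

lemma mult_ln_div_diff:
  fixes a c m p :: real
  assumes "c * a \<noteq> 0 \<longrightarrow> 0 < a \<and> 0 < m" and "0 < p"
  shows "c * a * ln (a / p) - c * a * ln (a / m) = c * a * ln (m / p)"
proof (cases "c * a = 0")
  case False
  with assms have "0 < a" "0 < m" by auto
  with \<open>0 < p\<close> have "ln (a / p) - ln (a / m) = ln (m / p)"
    by (simp add: ln_div)
  then show ?thesis
    by (metis right_diff_distrib)
qed auto

lemma nonzero_weight_imp_pos:
  fixes a c r :: real
  assumes "0 \<le> c" "0 \<le> a" "0 \<le> r"
  shows "c * a \<noteq> 0 \<longrightarrow> 0 < a \<and> 0 < c * a + r"
proof
  assume "c * a \<noteq> 0"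
  with assms have "0 < c" "0 < a"
    by (simp_all add: less_le)
  then show "0 < a \<and> 0 < c * a + r"
    using \<open>0 \<le> r\<close> by (simp add: add_pos_nonneg)
qed

lemma mixture_mult_ln_div:
  fixes a b p \<alpha> :: real
  assumes "0 \<le> a" "0 \<le> b" "0 < p" "0 \<le> \<alpha>" "\<alpha> \<le> 1"
  defines "m \<equiv> \<alpha> * a + (1 - \<alpha>) * b"
  shows "m * ln (m / p) =
           \<alpha> * (a * ln (a / p)) - \<alpha> * (a * ln (a / ((1 - (1 - \<alpha>)) * a + (1 - \<alpha>) * b)))
         + (1 - \<alpha>) * (b * ln (b / p)) - (1 - \<alpha>) * (b * ln (b / ((1 - \<alpha>) * b + \<alpha> * a)))"
proof -
  have "0 \<le> 1 - \<alpha>" "0 \<le> \<alpha> * a" "0 \<le> (1 - \<alpha>) * b"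
    using assms by simp_all
  then have pos_a: "\<alpha> * a \<noteq> 0 \<longrightarrow> 0 < a \<and> 0 < m"
    and pos_b: "(1 - \<alpha>) * b \<noteq> 0 \<longrightarrow> 0 < b \<and> 0 < m"
    using assms(1,2,4) nonzero_weight_imp_pos unfolding m_def by (metis add.commute)+
  have "\<alpha> * a * ln (a / p) - \<alpha> * a * ln (a / m) = \<alpha> * a * ln (m / p)"
       "(1 - \<alpha>) * b * ln (b / p) - (1 - \<alpha>) * b * ln (b / m) = (1 - \<alpha>) * b * ln (m / p)"
    using mult_ln_div_diff[OF pos_a \<open>0 < p\<close>] mult_ln_div_diff[OF pos_b \<open>0 < p\<close>] .
  moreover have "m * ln (m / p) = \<alpha> * a * ln (m / p) + (1 - \<alpha>) * b * ln (m / p)"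
    unfolding m_def by (simp only: distrib_right)
  moreover have "(1 - (1 - \<alpha>)) * a + (1 - \<alpha>) * b = m" "(1 - \<alpha>) * b + \<alpha> * a = m"
    unfolding m_def by simp_all
  ultimately show ?thesis
    by (simp only: mult.assoc)
qed

lemma KL_div_mixture:
  fixes a b p :: "'z::euclidean_space \<Rightarrow> real"
  assumes "\<And>z. 0 \<le> a z" "\<And>z. 0 \<le> b z" "\<And>z. 0 < p z" "0 \<le> \<alpha>" "\<alpha> \<le> 1"
    and "integrable lborel (\<lambda>z. a z * ln (a z / p z))"
    and "integrable lborel (\<lambda>z. b z * ln (b z / p z))"
    and "integrable lborel (\<lambda>z. a z * ln (a z / ((1 - (1 - \<alpha>)) * a z + (1 - \<alpha>) * b z)))"
    and "integrable lborel (\<lambda>z. b z * ln (b z / ((1 - \<alpha>) * b z + \<alpha> * a z)))"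
  shows "KL_div (\<lambda>z. \<alpha> * a z + (1 - \<alpha>) * b z) p =
           \<alpha> * KL_div a p + (1 - \<alpha>) * KL_div b p
         - \<alpha> * skew_div (1 - \<alpha>) a b - (1 - \<alpha>) * skew_div \<alpha> b a"
proof -
  have "KL_div (\<lambda>z. \<alpha> * a z + (1 - \<alpha>) * b z) p =
          (LINT z|lborel. \<alpha> * (a z * ln (a z / p z))
             - \<alpha> * (a z * ln (a z / ((1 - (1 - \<alpha>)) * a z + (1 - \<alpha>) * b z)))
             + (1 - \<alpha>) * (b z * ln (b z / p z))
             - (1 - \<alpha>) * (b z * ln (b z / ((1 - \<alpha>) * b z + \<alpha> * a z))))"
    unfolding KL_div_def using assms(1-5) by (simp add: mixture_mult_ln_div)
  also have "\<dots> = \<alpha> * KL_div a p + (1 - \<alpha>) * KL_div b p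
                 - \<alpha> * skew_div (1 - \<alpha>) a b - (1 - \<alpha>) * skew_div \<alpha> b a"
    unfolding skew_div_def KL_div_def using assms(6-9) by simp
  finally show ?thesis .
qed

lemma integral_mixture_mult:
  fixes a b g :: "'z \<Rightarrow> real"
  assumes "integrable M (\<lambda>z. a z * g z)" "integrable M (\<lambda>z. b z * g z)"
  shows "(LINT z|M. (\<alpha> * a z + (1 - \<alpha>) * b z) * g z) =
           \<alpha> * (LINT z|M. a z * g z) + (1 - \<alpha>) * (LINT z|M. b z * g z)"
  using assms by (simp add: distrib_right mult.assoc)

lemma prior_dens_pos: "0 < prior_dens T lam A B u z"
  unfolding prior_dens_def by (simp add: prod_pos)

lemma mix_dens_one: "mix_dens q_enc q_post \<phi> 1 x u = q_enc \<phi> x"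
  and mix_dens_zero: "mix_dens q_enc q_post \<phi> 0 x u = q_post \<phi> x u"
  by (simp_all add: mix_dens_def fun_eq_iff)

theorem proposition5:
  fixes p_eps :: "real^'dx::finite \<Rightarrow> real"
    and f :: "real^'dz::finite \<Rightarrow> real^'dx"
    and T :: "'dz \<Rightarrow> real \<Rightarrow> real^'k::finite"
    and lam :: "real^'du::finite \<Rightarrow> 'dz \<Rightarrow> real^'k"
    and A :: "real^'du \<Rightarrow> real" and B :: "real \<Rightarrow> real"
    and q_enc :: "'phi \<Rightarrow> real^'dx \<Rightarrow> real^'dz \<Rightarrow> real"
    and q_post :: "'phi \<Rightarrow> real^'dx \<Rightarrow> real^'du \<Rightarrow> real^'dz \<Rightarrow> real"
    and \<phi> :: 'phi and \<alpha> :: real and x :: "real^'dx" and u :: "real^'du"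
  assumes dims: "CARD('dz) < CARD('dx)"
    and alpha: "0 \<le> \<alpha>" "\<alpha> \<le> 1"
    \<comment> \<open>density hypotheses\<close>
    and noise: "p_eps \<in> borel_measurable lborel" "\<forall>e. 0 \<le> p_eps e"
               "integrable lborel p_eps" "integral\<^sup>L lborel p_eps = 1"
    and prior: "prior_dens T lam A B u \<in> borel_measurable lborel"
               "integrable lborel (prior_dens T lam A B u)"
               "integral\<^sup>L lborel (prior_dens T lam A B u) = 1"
    and enc: "q_enc \<phi> x \<in> borel_measurable lborel" "\<forall>z. 0 \<le> q_enc \<phi> x z"
             "integrable lborel (q_enc \<phi> x)" "integral\<^sup>L lborel (q_enc \<phi> x) = 1"
    and post: "q_post \<phi> x u \<in> borel_measurable lborel" "\<forall>z. 0 \<le> q_post \<phi> x u z"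
              "integrable lborel (q_post \<phi> x u)" "integral\<^sup>L lborel (q_post \<phi> x u) = 1"
    \<comment> \<open>all expectations and divergences appearing are finite\<close>
    and fin_exp: "\<forall>\<beta>\<in>{\<alpha>, 1, 0}. integrable lborel
                    (\<lambda>z. mix_dens q_enc q_post \<phi> \<beta> x u z * ln (dec_dens p_eps f x z))"
    and fin_kl: "\<forall>\<beta>\<in>{\<alpha>, 1, 0}. integrable lborel
                    (\<lambda>z. mix_dens q_enc q_post \<phi> \<beta> x u z
                         * ln (mix_dens q_enc q_post \<phi> \<beta> x u z / prior_dens T lam A B u z))"
    and fin_skew1: "integrable lborel (\<lambda>z. q_enc \<phi> x z
                      * ln (q_enc \<phi> x z / ((1 - (1 - \<alpha>)) * q_enc \<phi> x z + (1 - \<alpha>) * q_post \<phi> x u z)))"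
    and fin_skew2: "integrable lborel (\<lambda>z. q_post \<phi> x u z
                      * ln (q_post \<phi> x u z / ((1 - \<alpha>) * q_post \<phi> x u z + \<alpha> * q_enc \<phi> x z)))"
  shows "ELBO p_eps f T lam A B q_enc q_post \<phi> \<alpha> x u =
           \<alpha> * ELBO p_eps f T lam A B q_enc q_post \<phi> 1 x u
         + (1 - \<alpha>) * ELBO p_eps f T lam A B q_enc q_post \<phi> 0 x u
         + \<alpha> * skew_div (1 - \<alpha>) (q_enc \<phi> x) (q_post \<phi> x u)
         + (1 - \<alpha>) * skew_div \<alpha> (q_post \<phi> x u) (q_enc \<phi> x)"
proof -
  have mix: "mix_dens q_enc q_post \<phi> \<alpha> x u = (\<lambda>z. \<alpha> * q_enc \<phi> x z + (1 - \<alpha>) * q_post \<phi> x u z)"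
    by (simp add: mix_dens_def fun_eq_iff)
  have reconstruction:
    "(LINT z|lborel. mix_dens q_enc q_post \<phi> \<alpha> x u z * ln (dec_dens p_eps f x z)) =
       \<alpha> * (LINT z|lborel. q_enc \<phi> x z * ln (dec_dens p_eps f x z))
     + (1 - \<alpha>) * (LINT z|lborel. q_post \<phi> x u z * ln (dec_dens p_eps f x z))"
    using fin_exp unfolding mix by (intro integral_mixture_mult) (auto simp: mix_dens_def)
  have divergence:
    "KL_div (mix_dens q_enc q_post \<phi> \<alpha> x u) (prior_dens T lam A B u) =
       \<alpha> * KL_div (q_enc \<phi> x) (prior_dens T lam A B u)
     + (1 - \<alpha>) * KL_div (q_post \<phi> x u) (prior_dens T lam A B u)
     - \<alpha> * skew_div (1 - \<alpha>) (q_enc \<phi> x) (q_post \<phi> x u)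
     - (1 - \<alpha>) * skew_div \<alpha> (q_post \<phi> x u) (q_enc \<phi> x)"
    using enc(2) post(2) fin_kl fin_skew1 fin_skew2 alpha unfolding mix
    by (intro KL_div_mixture) (auto simp: prior_dens_pos mix_dens_def)
  show ?thesis
    unfolding ELBO_def reconstruction divergence mix_dens_one mix_dens_zero
    by (simp add: algebra_simps)
qed

end
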